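(* Let $d\in\mathbb N$ and equip $\mathcal M_d$ with the entrywise norm $\|A\|_{\ell_p}=(\sum_{i,j}|A_{ij}|^p)^{1/p}$. Let $\mathcal S\subseteq\mathcal M_d$ be bounded, $A\in\operatorname{conv}(\mathcal S)$. Then there is a sequence $(X_i)_{i\ge1}\subseteq\mathcal S$ such that $A_k=\frac1k\sum_{i=1}^kX_i$ satisfies, for all $k\ge1$, $\|A-A_k\|_{\ell_p}\le \frac{2e^2}{p^{1/p}}k^{1/p-1}\operatorname{diam}(\mathcal S)$ if $1<p\le2$, and $\|A-A_k\|_{\ell_p}\le e^2\sqrt{2(p-1)/k}\,\operatorname{diam}(\mathcal S)$ if $p\ge 2$ (diameters taken in $\|\cdot\|_{\ell_p}$). Equivalently, for every $\epsilon>0$ there is $B$ with $\|A-B\|_{\ell_p}\le\epsilon$ which is an average of at most $\lceil C_p(\operatorname{diam}(\mathcal S)/\epsilon)^{p/(p-1)}\rceil$ points of $\mathcal S$ if $1<p\le 2$, resp. at most $\lceil D_p(\operatorname{diam}(\mathcal S)/\epsilon)^{2}\rceil$ points if $p\ge2$, where $C_p=(2e^2/p^{1/p})^{p/(p-1)}$ and $D_p=2(p-1)e^4$.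
   Context: $\mathcal M_d$ denotes complex $d\times d$ matrices; $\operatorname{conv}$ denotes convex hull. *)

theory Defs
  imports "HOL-Analysis.Analysis"
begin

definition lp_norm :: "real \<Rightarrow> complex ^ 'n ^ 'n \<Rightarrow> real" where
  "lp_norm p A = (\<Sum>i\<in>UNIV. \<Sum>j\<in>UNIV. cmod (A $ i $ j) powr p) powr (1 / p)"

definition lp_diam :: "real \<Rightarrow> (complex ^ 'n ^ 'n) set \<Rightarrow> real" where
  "lp_diam p S = (SUP x\<in>S. SUP y\<in>S. lp_norm p (x - y))"

end

theory Submission
  imports Defs
begin

text \<open>
  Write A as a finite convex combination \<Sum>s u_s s of points of S. The points X_i are chosen
  greedily: X_(k+1) minimises \<Phi>(E_k + (A - X_(k+1))), where E_k = \<Sum>i\<le>k (A - X_i) and \<Phi> is a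
  potential. The increments A - s have u-mean zero, so the minimum is at most the u-average,
  and for a sufficiently smooth \<Phi> that average is at most \<Phi>(E_k) + K; hence \<Phi>(E_k) \<le> k K.
  For 1 < p \<le> 2 take \<Phi> = \<parallel>\<cdot>\<parallel>_p^p: the pointwise inequality
  |a + b|^p \<le> |a|^p + p |a|^(p-2) Re(conj(a) b) + 6 |b|^p gives K = 6 diam^p.
  For p \<ge> 2 take \<Phi> = \<parallel>\<cdot>\<parallel>_p^2, which is 2-uniformly smooth with constant p - 1 (a second-order
  Taylor bound combined with Hoelder's inequality), giving K = (p - 1) diam^2.
  Dividing by k gives the rates; the constants of the statement are generous.
\<close>

lemma powr_le_tangent:
  fixes q s s0 :: real
  assumes q: "0 < q" "q \<le> 1" and s: "0 \<le> s" and s0: "0 < s0"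
  shows "s powr q \<le> s0 powr q + q * s0 powr (q - 1) * (s - s0)"
proof -
  have e1: "s0 powr (q - 1) * s0 = s0 powr q"
    using powr_add[of s0 "q - 1" 1] s0 by simp
  have e2: "s0 powr (1 - q) * s0 powr (q - 1) = 1"
    using s0 by (simp add: powr_add[symmetric])
  show ?thesis
  proof (cases "s = 0")
    case True
    have "0 \<le> (1 - q) * s0 powr q" using q by simp
    then show ?thesis using True e1 by (simp add: algebra_simps)
  next
    case False
    with s have sp: "0 < s" by simp
    have Young: "s powr q * s0 powr (1 - q) \<le> q * s + (1 - q) * s0"
      using Youngs_inequality_0[of q "1 - q" s s0] q sp s0 by simp
    have "s powr q = s powr q * s0 powr (1 - q) * s0 powr (q - 1)"
      using e2 by (simp add: mult.assoc)
    also have "\<dots> \<le> (q * s + (1 - q) * s0) * s0 powr (q - 1)"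
      using Young by (rule mult_right_mono) simp
    also have "\<dots> = s0 powr q + q * s0 powr (q - 1) * (s - s0)"
      using e1 by (simp add: algebra_simps)
    finally show ?thesis .
  qed
qed

lemma Holder_sum_powr:
  fixes h g :: "'k \<Rightarrow> real" and q :: real
  assumes fin: "finite I" and ne: "I \<noteq> {}" and h_pos: "\<And>k. k \<in> I \<Longrightarrow> 0 < h k"
    and g_nonneg: "\<And>k. k \<in> I \<Longrightarrow> 0 \<le> g k" and q: "1 \<le> q"
  shows "(\<Sum>k\<in>I. h k powr (q - 1) * g k)
     \<le> (\<Sum>k\<in>I. h k powr q) powr (1 - 1/q) * (\<Sum>k\<in>I. g k powr q) powr (1/q)"
proof -
  define H where "H = (\<Sum>k\<in>I. h k powr q)"
  define Y where "Y = (\<Sum>k\<in>I. g k powr q)"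
  define \<theta> where "\<theta> = 1 - 1/q"
  have H_pos: "0 < H"
    unfolding H_def using fin ne h_pos by (intro sum_pos) (auto simp: less_imp_neq[symmetric])
  have Y_nonneg: "0 \<le> Y" unfolding Y_def by (intro sum_nonneg) auto
  have \<theta>: "0 \<le> \<theta>" "\<theta> + 1/q = 1" "0 \<le> 1/q" using q by (auto simp: \<theta>_def)
  show ?thesis
  proof (cases "Y = 0")
    case True
    then have "\<forall>k\<in>I. g k powr q = 0" unfolding Y_def using fin
      by (subst sum_nonneg_eq_0_iff[symmetric]) auto
    then show ?thesis by simp
  next
    case False
    with Y_nonneg have Y_pos: "0 < Y" by simp
    have term_le: "h k powr (q - 1) * g k
        \<le> H powr \<theta> * Y powr (1/q) * (\<theta> * (h k powr q / H) + 1/q * (g k powr q / Y))"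
      if k: "k \<in> I" for k
    proof (cases "g k = 0")
      case True
      then show ?thesis using \<theta> H_pos Y_pos by simp
    next
      case False
      have gk: "0 < g k" using False g_nonneg[OF k] by simp
      have hk: "0 < h k" using h_pos[OF k] .
      have Young: "(h k powr q / H) powr \<theta> * (g k powr q / Y) powr (1/q)
          \<le> \<theta> * (h k powr q / H) + 1/q * (g k powr q / Y)"
        by (rule Youngs_inequality_0) (use \<theta> H_pos Y_pos gk hk in auto)
      have e1: "(h k powr q / H) powr \<theta> = h k powr (q - 1) / H powr \<theta>"
        using hk H_pos q by (simp add: powr_divide powr_powr \<theta>_def algebra_simps)
      have e2: "(g k powr q / Y) powr (1/q) = g k / Y powr (1/q)"
        using gk Y_pos q by (simp add: powr_divide powr_powr)
      have "h k powr (q - 1) * g k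
          = H powr \<theta> * Y powr (1/q) * ((h k powr q / H) powr \<theta> * (g k powr q / Y) powr (1/q))"
        unfolding e1 e2 using H_pos Y_pos by (simp add: field_simps)
      also have "\<dots> \<le> H powr \<theta> * Y powr (1/q) * (\<theta> * (h k powr q / H) + 1/q * (g k powr q / Y))"
        by (rule mult_left_mono[OF Young]) simp
      finally show ?thesis .
    qed
    have "(\<Sum>k\<in>I. h k powr (q - 1) * g k)
        \<le> H powr \<theta> * Y powr (1/q) * (\<Sum>k\<in>I. \<theta> * (h k powr q / H) + 1/q * (g k powr q / Y))"
      unfolding sum_distrib_left by (rule sum_mono) (rule term_le)
    also have "(\<Sum>k\<in>I. \<theta> * (h k powr q / H) + 1/q * (g k powr q / Y)) = \<theta> * (H / H) + 1/q * (Y / Y)"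
      unfolding sum.distrib sum_distrib_left[symmetric] sum_divide_distrib[symmetric] H_def Y_def ..
    finally show ?thesis using H_pos Y_pos \<theta> by (simp add: H_def Y_def \<theta>_def)
  qed
qed

lemma cmod_add_power2: "(cmod (a + b))^2 = (cmod a)^2 + 2 * Re (cnj a * b) + (cmod b)^2"
  unfolding cmod_power2 by (simp add: power2_eq_square algebra_simps)

lemma abs_Re_cnj_mult_le: "\<bar>Re (cnj a * b)\<bar> \<le> cmod a * cmod b"
  using abs_Re_le_cmod[of "cnj a * b"] by (simp add: norm_mult)

lemma power2_powr: "0 \<le> (x::real) \<Longrightarrow> (x^2) powr q = x powr (2 * q)"
  by (simp add: powr_powr flip: powr_numeral)

lemma powr_convex_nonneg:
  assumes "1 \<le> p" shows "convex_on {0..} (\<lambda>x::real. x powr p)"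
proof (rule convex_on_linorderI)
  fix t x y :: real
  assume t: "0 < t" "t < 1" and x: "x \<in> {0..}" and y: "y \<in> {0..}" and xy: "x < y"
  show "((1 - t) *\<^sub>R x + t *\<^sub>R y) powr p \<le> (1 - t) * x powr p + t * y powr p"
  proof (cases "x = 0")
    case True
    have "(t * y) powr p = t powr p * y powr p" using t y by (simp add: powr_mult)
    also have "\<dots> \<le> t powr 1 * y powr p"
      by (rule mult_right_mono, rule powr_mono') (use t assms in auto)
    finally show ?thesis using True t by simp
  next
    case False
    then show ?thesis using convex_onD[OF powr_convex[OF assms], of t x y] t x y xy by auto
  qed
qed auto

section \<open>A two-point inequality for 1 < p \<le> 2\<close>

text \<open>At a = 0 the middle term vanishes, since 0 powr x = 0 even for negative x.\<close>

lemma cmod_add_powr_le: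
  fixes p :: real and a b :: complex
  assumes p: "1 < p" "p \<le> 2"
  shows "cmod (a + b) powr p
    \<le> cmod a powr p + p * cmod a powr (p - 2) * Re (cnj a * b) + 6 * cmod b powr p"
proof (cases "a = 0")
  case True
  then show ?thesis by simp
next
  case False
  define A where "A = cmod a"
  define B where "B = cmod b"
  have A_pos: "0 < A" using False by (simp add: A_def)
  have B_nonneg: "0 \<le> B" by (simp add: B_def)
  have Re_le: "\<bar>Re (cnj a * b)\<bar> \<le> A * B" using abs_Re_cnj_mult_le by (simp add: A_def B_def)
  show ?thesis
  proof (cases "B \<le> A")
    case True
    \<comment> \<open>Small perturbation: |a + b|^p = (|a + b|^2)^(p/2) lies below the tangent of the concave
        map s \<mapsto> s^(p/2) at |a|^2.\<close>
    define s where "s = (cmod (a + b))^2"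
    have s_eq: "s = A^2 + 2 * Re (cnj a * b) + B^2"
      by (simp add: s_def A_def B_def cmod_add_power2)
    have "cmod (a + b) powr p = s powr (p/2)" by (simp add: s_def power2_powr)
    also have "\<dots> \<le> (A^2) powr (p/2) + (p/2) * (A^2) powr (p/2 - 1) * (s - A^2)"
      by (rule powr_le_tangent) (use p A_pos in \<open>auto simp: s_def\<close>)
    also have "(A^2) powr (p/2 - 1) = A powr (p - 2)"
      using A_pos by (simp add: power2_powr algebra_simps)
    also have "(A^2) powr (p/2) = A powr p" using A_pos by (simp add: power2_powr)
    finally have tangent: "cmod (a + b) powr p \<le> A powr p + p * A powr (p - 2) * Re (cnj a * b)
        + (p/2) * (A powr (p - 2) * B^2)"
      by (simp add: s_eq algebra_simps)
    have rest: "A powr (p - 2) * B^2 \<le> B powr p"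
    proof (cases "B = 0")
      case False
      then have B_pos: "0 < B" using B_nonneg by simp
      have "A powr (p - 2) \<le> B powr (p - 2)"
        by (rule powr_mono2') (use p B_pos True in auto)
      then have "A powr (p - 2) * B^2 \<le> B powr (p - 2) * B powr 2"
        using B_pos by (simp add: mult_right_mono)
      also have "\<dots> = B powr p" by (simp add: powr_add[symmetric])
      finally show ?thesis .
    qed simp
    have "(p/2) * (A powr (p - 2) * B^2) \<le> 1 * B powr p"
      by (rule mult_mono) (use p rest in auto)
    then show ?thesis using tangent powr_ge_zero[of B p] unfolding A_def B_def by linarith
  next
    case False
    \<comment> \<open>Large perturbation: every term is dominated by |b|^p.\<close>
    have "cmod (a + b) \<le> 2 * B"
      using norm_triangle_ineq[of a b] False by (simp add: A_def B_def)
    then have "cmod (a + b) powr p \<le> (2 * B) powr p"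
      using powr_mono2[of p "cmod (a + b)" "2 * B"] p by simp
    also have "\<dots> = 2 powr p * B powr p" using B_nonneg by (simp add: powr_mult)
    also have "\<dots> \<le> 4 * B powr p"
    proof -
      have "2 powr p \<le> 2 powr (2::real)" using p by (subst powr_le_cancel_iff) auto
      then show ?thesis by (simp add: mult_right_mono)
    qed
    finally have main: "cmod (a + b) powr p \<le> 4 * B powr p" .
    have "A powr (p - 2) * \<bar>Re (cnj a * b)\<bar> \<le> A powr (p - 2) * (A * B)"
      by (rule mult_left_mono[OF Re_le]) simp
    also have "\<dots> = A powr (p - 1) * B"
      using A_pos powr_add[of A "p - 2" 1] by simp
    also have "\<dots> \<le> B powr (p - 1) * B"
      by (rule mult_right_mono, rule powr_mono2) (use p False A_pos B_nonneg in auto)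
    also have "\<dots> = B powr p"
      using powr_add[of B "p - 1" 1] B_nonneg False A_pos by simp
    finally have "A powr (p - 2) * \<bar>Re (cnj a * b)\<bar> \<le> B powr p" .
    then have "\<bar>p * A powr (p - 2) * Re (cnj a * b)\<bar> \<le> 2 * B powr p"
      using mult_mono[of p 2 "A powr (p - 2) * \<bar>Re (cnj a * b)\<bar>" "B powr p"] p
      by (simp add: abs_mult mult.assoc)
    then show ?thesis using main powr_ge_zero[of A p] unfolding A_def B_def abs_le_iff by linarith
  qed
qed

lemma mean_sum_cmod_powr_add_le:
  fixes x :: "'k \<Rightarrow> complex" and y :: "'s \<Rightarrow> 'k \<Rightarrow> complex" and p :: real
  assumes p: "1 < p" "p \<le> 2"
    and u_nonneg: "\<And>s. s \<in> F \<Longrightarrow> 0 \<le> u s" and u_sum: "sum u F = 1"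
    and mean: "\<And>k. k \<in> I \<Longrightarrow> (\<Sum>s\<in>F. u s *\<^sub>R y s k) = 0"
  shows "(\<Sum>s\<in>F. u s * (\<Sum>k\<in>I. cmod (x k + y s k) powr p))
     \<le> (\<Sum>k\<in>I. cmod (x k) powr p) + 6 * (\<Sum>s\<in>F. u s * (\<Sum>k\<in>I. cmod (y s k) powr p))"
proof -
  have coordinate_le: "(\<Sum>s\<in>F. u s * cmod (x k + y s k) powr p)
      \<le> cmod (x k) powr p + 6 * (\<Sum>s\<in>F. u s * cmod (y s k) powr p)" if k: "k \<in> I" for k
  proof -
    define c where "c = p * cmod (x k) powr (p - 2)"
    have "(\<Sum>s\<in>F. u s * cmod (x k + y s k) powr p)
        \<le> (\<Sum>s\<in>F. u s * (cmod (x k) powr p + c * Re (cnj (x k) * y s k) + 6 * cmod (y s k) powr p))"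
      unfolding c_def
      by (rule sum_mono, rule mult_left_mono[OF cmod_add_powr_le[OF p]]) (use u_nonneg in auto)
    also have "\<dots> = sum u F * cmod (x k) powr p + c * Re (cnj (x k) * (\<Sum>s\<in>F. u s *\<^sub>R y s k))
        + 6 * (\<Sum>s\<in>F. u s * cmod (y s k) powr p)"
      by (simp add: sum.distrib sum_distrib_left sum_distrib_right Re_sum scaleR_conv_of_real
          algebra_simps)
    finally show ?thesis using u_sum mean[OF k] by simp
  qed
  have "(\<Sum>s\<in>F. u s * (\<Sum>k\<in>I. cmod (x k + y s k) powr p))
      = (\<Sum>k\<in>I. \<Sum>s\<in>F. u s * cmod (x k + y s k) powr p)"
    by (simp add: sum_distrib_left sum.swap[of _ F])
  also have "\<dots> \<le> (\<Sum>k\<in>I. cmod (x k) powr p + 6 * (\<Sum>s\<in>F. u s * cmod (y s k) powr p))"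
    by (rule sum_mono) (rule coordinate_le)
  also have "\<dots> = (\<Sum>k\<in>I. cmod (x k) powr p) + 6 * (\<Sum>s\<in>F. u s * (\<Sum>k\<in>I. cmod (y s k) powr p))"
    by (simp add: sum.distrib sum_distrib_left sum.swap[of _ F])
  finally show ?thesis .
qed

section \<open>Uniform smoothness of the 2q-norm\<close>

lemma powr_sum_second_derivative_le:
  fixes h h' \<gamma> :: "'k \<Rightarrow> real" and q :: real
  assumes fin: "finite I" and ne: "I \<noteq> {}" and q: "1 \<le> q"
    and h_pos: "\<And>k. k \<in> I \<Longrightarrow> 0 < h k" and \<gamma>_nonneg: "\<And>k. k \<in> I \<Longrightarrow> 0 \<le> \<gamma> k"
    and h'_le: "\<And>k. k \<in> I \<Longrightarrow> h' k * h' k \<le> 4 * h k * \<gamma> k"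
  defines "G \<equiv> \<Sum>k\<in>I. h k powr q"
    and "G' \<equiv> \<Sum>k\<in>I. q * h k powr (q - 1) * h' k"
    and "G'' \<equiv> \<Sum>k\<in>I. q * ((q - 1) * h k powr (q - 2) * h' k * h' k + h k powr (q - 1) * (2 * \<gamma> k))"
  shows "1/q * ((1/q - 1) * G powr (1/q - 2) * G' * G' + G powr (1/q - 1) * G'')
    \<le> (4*q - 2) * (\<Sum>k\<in>I. \<gamma> k powr q) powr (1/q)"
proof -
  define Y where "Y = (\<Sum>k\<in>I. \<gamma> k powr q)"
  have G_pos: "0 < G"
    unfolding G_def using fin ne h_pos by (intro sum_pos) (auto simp: less_imp_neq[symmetric])
  have first: "(1/q - 1) * G powr (1/q - 2) * G' * G' \<le> 0"
  proof -
    have "0 \<le> G powr (1/q - 2) * (G' * G')" by simp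
    moreover have "1/q - 1 \<le> 0" using q by simp
    ultimately show ?thesis by (simp add: mult_nonpos_nonneg mult.assoc)
  qed
  have term_le: "q * ((q - 1) * h k powr (q - 2) * h' k * h' k + h k powr (q - 1) * (2 * \<gamma> k))
      \<le> q * (4*q - 2) * (h k powr (q - 1) * \<gamma> k)" if k: "k \<in> I" for k
  proof -
    have "(q - 1) * h k powr (q - 2) * (h' k * h' k) \<le> (q - 1) * h k powr (q - 2) * (4 * h k * \<gamma> k)"
      by (rule mult_left_mono[OF h'_le[OF k]]) (use q in simp)
    also have "\<dots> = 4 * (q - 1) * ((h k powr (q - 2) * h k) * \<gamma> k)"
      by (simp only: mult_ac)
    also have "h k powr (q - 2) * h k = h k powr (q - 1)"
      using powr_add[of "h k" "q - 2" 1] h_pos[OF k] by simp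
    finally have "(q - 1) * h k powr (q - 2) * h' k * h' k + h k powr (q - 1) * (2 * \<gamma> k)
        \<le> (4*q - 2) * (h k powr (q - 1) * \<gamma> k)"
      by (simp add: algebra_simps)
    then show ?thesis using q by (simp add: mult.assoc mult_left_mono)
  qed
  have "G'' \<le> q * (4*q - 2) * (\<Sum>k\<in>I. h k powr (q - 1) * \<gamma> k)"
    unfolding G''_def sum_distrib_left by (rule sum_mono) (rule term_le)
  also have "\<dots> \<le> q * (4*q - 2) * (G powr (1 - 1/q) * Y powr (1/q))"
    unfolding G_def Y_def
    by (rule mult_left_mono, rule Holder_sum_powr) (use fin ne h_pos \<gamma>_nonneg q in auto)
  finally have second: "G'' \<le> q * (4*q - 2) * (G powr (1 - 1/q) * Y powr (1/q))" .
  have "1/q * ((1/q - 1) * G powr (1/q - 2) * G' * G' + G powr (1/q - 1) * G'')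
      \<le> 1/q * (0 + G powr (1/q - 1) * G'')"
    using first q by (intro mult_left_mono add_right_mono) auto
  also have "\<dots> \<le> 1/q * (G powr (1/q - 1) * (q * (4*q - 2) * (G powr (1 - 1/q) * Y powr (1/q))))"
    using mult_left_mono[OF second, of "G powr (1/q - 1)"] q by (intro mult_left_mono) simp_all
  also have "\<dots> = (4*q - 2) * Y powr (1/q) * (G powr (1/q - 1) * G powr (1 - 1/q))"
    using q by (simp add: field_simps)
  also have "G powr (1/q - 1) * G powr (1 - 1/q) = 1"
    using G_pos by (simp add: powr_add[symmetric])
  finally show ?thesis by (simp add: Y_def)
qed

lemma powr_sum_quadratic_le:
  fixes \<alpha> \<beta> \<gamma> :: "'k \<Rightarrow> real" and q :: real
  assumes fin: "finite I" and ne: "I \<noteq> {}" and q: "1 \<le> q"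
    and pos: "\<And>k t. k \<in> I \<Longrightarrow> 0 < \<alpha> k + 2 * \<beta> k * t + \<gamma> k * t^2"
    and discr: "\<And>k. k \<in> I \<Longrightarrow> (\<beta> k)^2 \<le> \<alpha> k * \<gamma> k"
    and \<gamma>_nonneg: "\<And>k. k \<in> I \<Longrightarrow> 0 \<le> \<gamma> k"
  shows "(\<Sum>k\<in>I. (\<alpha> k + 2 * \<beta> k + \<gamma> k) powr q) powr (1/q)
    \<le> (\<Sum>k\<in>I. \<alpha> k powr q) powr (1/q)
      + (\<Sum>k\<in>I. \<alpha> k powr q) powr (1/q - 1) * (\<Sum>k\<in>I. \<alpha> k powr (q - 1) * (2 * \<beta> k))
      + (2*q - 1) * (\<Sum>k\<in>I. \<gamma> k powr q) powr (1/q)"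
proof -
  \<comment> \<open>Second-order Taylor expansion of t \<mapsto> (\<Sum>k. h k t ^ q)^(1/q) on [0, 1].\<close>
  define h where "h k t = \<alpha> k + 2 * \<beta> k * t + \<gamma> k * t^2" for k t
  define h' where "h' k t = 2 * \<beta> k + 2 * \<gamma> k * t" for k t
  define G where "G t = (\<Sum>k\<in>I. h k t powr q)" for t
  define G' where "G' t = (\<Sum>k\<in>I. q * h k t powr (q - 1) * h' k t)" for t
  define G'' where "G'' t = (\<Sum>k\<in>I. q * ((q - 1) * h k t powr (q - 2) * h' k t * h' k t
    + h k t powr (q - 1) * (2 * \<gamma> k)))" for t
  define g where "g t = G t powr (1/q)" for t
  define g' where "g' t = 1/q * G t powr (1/q - 1) * G' t" for t
  define g'' where "g'' t = 1/q * ((1/q - 1) * G t powr (1/q - 2) * G' t * G' t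
    + G t powr (1/q - 1) * G'' t)" for t
  have h_pos: "0 < h k t" if "k \<in> I" for k t using pos[OF that] by (simp add: h_def)
  have G_pos: "0 < G t" for t
    unfolding G_def using fin ne h_pos by (intro sum_pos) (auto simp: less_imp_neq[symmetric])
  have Dh: "DERIV (h k) t :> h' k t" for k t
    unfolding h_def h'_def by (auto intro!: derivative_eq_intros)
  have Dh': "DERIV (h' k) t :> 2 * \<gamma> k" for k t
    unfolding h'_def by (auto intro!: derivative_eq_intros)
  have DG: "DERIV G t :> G' t" for t
    unfolding G_def G'_def
    by (rule DERIV_sum) (use DERIV_fun_powr[OF Dh h_pos, where r = q] in simp)
  have DG': "DERIV G' t :> G'' t" for t
    unfolding G'_def G''_def
    by (rule DERIV_sum, rule DERIV_cong[OF DERIV_mult[OF DERIV_cmult[OF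
          DERIV_fun_powr[OF Dh h_pos, where r = "q - 1"]] Dh']]) (simp_all add: algebra_simps)
  have Dg: "DERIV g t :> g' t" for t
    using DERIV_fun_powr[OF DG G_pos, where r = "1/q"] by (simp add: g_def[abs_def] g'_def)
  have Dg': "DERIV g' t :> g'' t" for t
    unfolding g'_def[abs_def] g''_def
    by (rule DERIV_cong[OF DERIV_mult[OF DERIV_cmult[OF DERIV_fun_powr[OF DG G_pos,
          where r = "1/q - 1"]] DG']]) (simp add: algebra_simps)
  define diff where "diff m = (if m = 0 then g else if m = 1 then g' else g'')" for m :: nat
  have "\<forall>m t. m < 2 \<and> 0 \<le> t \<and> t \<le> 1 \<longrightarrow> DERIV (diff m) t :> diff (Suc m) t"
    using Dg Dg' by (auto simp: diff_def less_2_cases_iff)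
  then obtain t where "g 1 = (\<Sum>m<2. diff m 0 / fact m * 1 ^ m) + diff 2 t / fact 2 * 1 ^ 2"
    using Maclaurin[of 1 2 diff g] by (auto simp: diff_def)
  then have Taylor: "g 1 = g 0 + g' 0 + g'' t / 2"
    by (simp add: diff_def numeral_2_eq_2)
  have h'_le: "h' k t * h' k t \<le> 4 * h k t * \<gamma> k" if "k \<in> I" for k
  proof -
    have "0 \<le> 4 * (\<alpha> k * \<gamma> k - (\<beta> k)^2)" using discr[OF that] by simp
    also have "\<dots> = 4 * h k t * \<gamma> k - h' k t * h' k t"
      by (simp add: h_def h'_def power2_eq_square algebra_simps)
    finally show ?thesis by simp
  qed
  have "g'' t \<le> (4*q - 2) * (\<Sum>k\<in>I. \<gamma> k powr q) powr (1/q)"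
    unfolding g''_def G_def G'_def G''_def
    by (rule powr_sum_second_derivative_le) (use fin ne q h_pos \<gamma>_nonneg h'_le in auto)
  moreover have "g 1 = (\<Sum>k\<in>I. (\<alpha> k + 2 * \<beta> k + \<gamma> k) powr q) powr (1/q)"
    by (simp add: g_def G_def h_def)
  moreover have "g 0 = (\<Sum>k\<in>I. \<alpha> k powr q) powr (1/q)"
    by (simp add: g_def G_def h_def)
  moreover have "g' 0 = (\<Sum>k\<in>I. \<alpha> k powr q) powr (1/q - 1) * (\<Sum>k\<in>I. \<alpha> k powr (q - 1) * (2 * \<beta> k))"
    using q by (simp add: g'_def G_def G'_def h_def h'_def sum_distrib_left[symmetric] mult.assoc)
  ultimately show ?thesis using Taylor by (simp add: algebra_simps)
qed

text \<open>
  The regularisation \<epsilon> > 0 keeps |x_k + t y_k|^2 + \<epsilon> positive, so that the Taylor argument of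
  \<open>powr_sum_quadratic_le\<close> applies; it is removed by a limit once the first-order term has been
  averaged out.
\<close>

lemma sum_cmod_powr_root_add_le_regularized:
  fixes x y :: "'k \<Rightarrow> complex" and q \<epsilon> :: real
  assumes fin: "finite I" and ne: "I \<noteq> {}" and q: "1 \<le> q" and \<epsilon>: "0 < \<epsilon>"
  shows "(\<Sum>k\<in>I. cmod (x k + y k) powr (2*q)) powr (1/q)
     \<le> (\<Sum>k\<in>I. (cmod (x k)^2 + \<epsilon>) powr q) powr (1/q)
       + (\<Sum>k\<in>I. (cmod (x k)^2 + \<epsilon>) powr q) powr (1/q - 1) *
           (\<Sum>k\<in>I. (cmod (x k)^2 + \<epsilon>) powr (q - 1) * (2 * Re (cnj (x k) * y k)))
       + (2*q - 1) * (\<Sum>k\<in>I. cmod (y k) powr (2*q)) powr (1/q)"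
proof -
  define \<alpha> where "\<alpha> k = cmod (x k)^2 + \<epsilon>" for k
  define \<beta> where "\<beta> k = Re (cnj (x k) * y k)" for k
  define \<gamma> where "\<gamma> k = cmod (y k)^2" for k
  have expand: "\<alpha> k + 2 * \<beta> k * t + \<gamma> k * t^2 = cmod (x k + of_real t * y k)^2 + \<epsilon>" for k t
    by (simp add: \<alpha>_def \<beta>_def \<gamma>_def cmod_add_power2 norm_mult power_mult_distrib algebra_simps)
  have discr: "(\<beta> k)^2 \<le> \<alpha> k * \<gamma> k" for k
  proof -
    have "(\<beta> k)^2 \<le> (cmod (x k) * cmod (y k))^2"
      unfolding \<beta>_def using abs_Re_cnj_mult_le by (metis abs_ge_zero power2_abs power_mono)
    also have "\<dots> \<le> \<alpha> k * \<gamma> k"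
      using \<epsilon> by (simp add: \<alpha>_def \<gamma>_def power_mult_distrib algebra_simps)
    finally show ?thesis .
  qed
  have pos: "0 < \<alpha> k + 2 * \<beta> k * t + \<gamma> k * t^2" for k t
    unfolding expand using \<epsilon> by (simp add: add_nonneg_pos)
  have "(\<Sum>k\<in>I. cmod (x k + y k) powr (2*q)) \<le> (\<Sum>k\<in>I. (\<alpha> k + 2 * \<beta> k + \<gamma> k) powr q)"
  proof (rule sum_mono)
    fix k
    have "cmod (x k + y k) powr (2*q) = (cmod (x k + y k)^2) powr q" by (simp add: power2_powr)
    also have "\<dots> \<le> (\<alpha> k + 2 * \<beta> k + \<gamma> k) powr q"
      using expand[of k 1] \<epsilon> q by (intro powr_mono2) auto
    finally show "cmod (x k + y k) powr (2*q) \<le> (\<alpha> k + 2 * \<beta> k + \<gamma> k) powr q" .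
  qed
  then have "(\<Sum>k\<in>I. cmod (x k + y k) powr (2*q)) powr (1/q)
      \<le> (\<Sum>k\<in>I. (\<alpha> k + 2 * \<beta> k + \<gamma> k) powr q) powr (1/q)"
    using q by (intro powr_mono2) (auto intro: sum_nonneg)
  also have "\<dots> \<le> (\<Sum>k\<in>I. \<alpha> k powr q) powr (1/q)
      + (\<Sum>k\<in>I. \<alpha> k powr q) powr (1/q - 1) * (\<Sum>k\<in>I. \<alpha> k powr (q - 1) * (2 * \<beta> k))
      + (2*q - 1) * (\<Sum>k\<in>I. \<gamma> k powr q) powr (1/q)"
    by (rule powr_sum_quadratic_le[OF fin ne q pos discr]) (simp add: \<gamma>_def)
  finally show ?thesis by (simp add: \<alpha>_def \<beta>_def \<gamma>_def power2_powr)
qed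

lemma mean_sum_cmod_powr_root_add_le:
  fixes x :: "'k \<Rightarrow> complex" and y :: "'s \<Rightarrow> 'k \<Rightarrow> complex" and q :: real
  assumes fin: "finite I" and ne: "I \<noteq> {}" and q: "1 \<le> q"
    and u_nonneg: "\<And>s. s \<in> F \<Longrightarrow> 0 \<le> u s" and u_sum: "sum u F = 1"
    and mean: "\<And>k. k \<in> I \<Longrightarrow> (\<Sum>s\<in>F. u s *\<^sub>R y s k) = 0"
  shows "(\<Sum>s\<in>F. u s * (\<Sum>k\<in>I. cmod (x k + y s k) powr (2*q)) powr (1/q))
     \<le> (\<Sum>k\<in>I. cmod (x k) powr (2*q)) powr (1/q)
       + (2*q - 1) * (\<Sum>s\<in>F. u s * (\<Sum>k\<in>I. cmod (y s k) powr (2*q)) powr (1/q))"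
proof -
  define T where "T = (\<Sum>s\<in>F. u s * (\<Sum>k\<in>I. cmod (x k + y s k) powr (2*q)) powr (1/q))"
  define R where "R = (2*q - 1) * (\<Sum>s\<in>F. u s * (\<Sum>k\<in>I. cmod (y s k) powr (2*q)) powr (1/q))"
  define G where "G \<epsilon> = (\<Sum>k\<in>I. (cmod (x k)^2 + \<epsilon>) powr q)" for \<epsilon> :: real
  \<comment> \<open>The first-order terms are linear in y s and average out.\<close>
  have regularized: "T \<le> G \<epsilon> powr (1/q) + R" if \<epsilon>: "0 < \<epsilon>" for \<epsilon>
  proof -
    define c where "c k = (cmod (x k)^2 + \<epsilon>) powr (q - 1)" for k
    define L where "L s = G \<epsilon> powr (1/q - 1) * (\<Sum>k\<in>I. c k * (2 * Re (cnj (x k) * y s k)))" for s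
    have "T \<le> (\<Sum>s\<in>F. u s * (G \<epsilon> powr (1/q) + L s
        + (2*q - 1) * (\<Sum>k\<in>I. cmod (y s k) powr (2*q)) powr (1/q)))"
      unfolding T_def
    proof (rule sum_mono, rule mult_left_mono)
      fix s assume "s \<in> F"
      then show "0 \<le> u s" by (rule u_nonneg)
      show "(\<Sum>k\<in>I. cmod (x k + y s k) powr (2*q)) powr (1/q) \<le> G \<epsilon> powr (1/q) + L s
          + (2*q - 1) * (\<Sum>k\<in>I. cmod (y s k) powr (2*q)) powr (1/q)"
        unfolding G_def L_def c_def by (rule sum_cmod_powr_root_add_le_regularized[OF fin ne q \<epsilon>])
    qed
    also have "\<dots> = sum u F * G \<epsilon> powr (1/q) + (\<Sum>s\<in>F. u s * L s) + R"
      unfolding distrib_left sum.distrib R_def by (simp add: sum_distrib_left sum_distrib_right mult_ac)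
    also have "(\<Sum>s\<in>F. u s * L s)
        = G \<epsilon> powr (1/q - 1) * (\<Sum>k\<in>I. c k * (2 * Re (cnj (x k) * (\<Sum>s\<in>F. u s *\<^sub>R y s k))))"
      unfolding L_def
      by (simp add: sum_distrib_left sum.swap[of _ F] Re_sum scaleR_conv_of_real algebra_simps)
    also have "\<dots> = 0" by (simp add: mean)
    finally show ?thesis using u_sum by simp
  qed
  have lim: "((\<lambda>\<epsilon>. G \<epsilon> powr (1/q) + R) \<longlongrightarrow> G 0 powr (1/q) + R) (at_right 0)"
    unfolding G_def using q
    by (intro tendsto_intros tendsto_powr') (auto intro!: sum_nonneg eventually_at_rightI[of 0 1])
  have "T \<le> G 0 powr (1/q) + R"
    by (rule tendsto_le[OF _ lim tendsto_const]) (auto intro!: eventually_at_rightI[of 0 1] regularized)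
  then show ?thesis by (simp add: T_def R_def G_def power2_powr)
qed

section \<open>Greedy selection\<close>

lemma greedy_sequence:
  fixes \<Phi> :: "'a::ab_group_add \<Rightarrow> real" and A :: 'a
  assumes fin: "finite F" and ne: "F \<noteq> {}"
    and u_nonneg: "\<And>s. s \<in> F \<Longrightarrow> 0 \<le> u s" and u_sum: "sum u F = 1"
    and step: "\<And>e. (\<Sum>s\<in>F. u s * \<Phi> (e + (A - s))) \<le> \<Phi> e + K"
    and \<Phi>_0: "\<Phi> 0 = 0"
  shows "\<exists>X. (\<forall>i. X i \<in> F) \<and> (\<forall>k. \<Phi> (\<Sum>i=1..k. (A - X i)) \<le> real k * K)"
proof -
  \<comment> \<open>Choosing the next point to minimise \<Phi> does at least as well as the u-average of the choices.\<close>
  define pick where "pick e = arg_min_on (\<lambda>s. \<Phi> (e + (A - s))) F" for e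
  have pick_in: "pick e \<in> F" for e
    unfolding pick_def by (rule arg_min_if_finite(1)[OF fin ne])
  have pick_le: "\<Phi> (e + (A - pick e)) \<le> \<Phi> (e + (A - t))" if "t \<in> F" for e t
    unfolding pick_def by (rule arg_min_least[OF fin ne that])
  define E where "E = rec_nat 0 (\<lambda>_ e. e + (A - pick e))"
  have E_0: "E 0 = 0" and E_Suc: "E (Suc k) = E k + (A - pick (E k))" for k
    by (simp_all add: E_def)
  define X where "X i = pick (E (i - 1))" for i
  have sum_eq: "(\<Sum>i=1..k. (A - X i)) = E k" for k
    by (induction k) (simp_all add: E_0 E_Suc X_def)
  have "\<Phi> (E k) \<le> real k * K" for k
  proof (induction k)
    case (Suc k)
    have "\<Phi> (E (Suc k)) = (\<Sum>t\<in>F. u t * \<Phi> (E k + (A - pick (E k))))"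
      by (simp add: E_Suc sum_distrib_right[symmetric] u_sum)
    also have "\<dots> \<le> (\<Sum>t\<in>F. u t * \<Phi> (E k + (A - t)))"
      by (intro sum_mono mult_left_mono pick_le u_nonneg)
    also have "\<dots> \<le> \<Phi> (E k) + K" by (rule step)
    finally show ?case using Suc by (simp add: algebra_simps)
  qed (simp add: E_0 \<Phi>_0)
  moreover have "X i \<in> F" for i by (simp add: X_def pick_in)
  ultimately show ?thesis using sum_eq by metis
qed

definition entry :: "complex ^ 'n ^ 'n \<Rightarrow> 'n \<times> 'n \<Rightarrow> complex" where
  "entry z k = z $ fst k $ snd k"

definition lp_power_sum :: "real \<Rightarrow> complex ^ 'n ^ 'n \<Rightarrow> real" where
  "lp_power_sum p z = (\<Sum>k\<in>UNIV. cmod (entry z k) powr p)"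

lemma lp_norm_eq_lp_power_sum: "lp_norm p z = lp_power_sum p z powr (1/p)"
  unfolding lp_norm_def lp_power_sum_def entry_def
  by (simp add: sum.cartesian_product case_prod_beta)

lemma entry_simps [simp]:
  "entry (a + b) k = entry a k + entry b k"
  "entry (a - b) k = entry a k - entry b k"
  "entry (c *\<^sub>R a) k = c *\<^sub>R entry a k"
  "entry 0 k = 0"
  "entry (sum f F) k = (\<Sum>x\<in>F. entry (f x) k)"
  by (simp_all add: entry_def)

lemma lp_power_sum_nonneg [simp]: "0 \<le> lp_power_sum p z"
  unfolding lp_power_sum_def by (intro sum_nonneg) auto

lemma lp_norm_nonneg [simp]: "0 \<le> lp_norm p z"
  by (simp add: lp_norm_eq_lp_power_sum)

lemma lp_norm_powr: "0 < p \<Longrightarrow> lp_norm p z powr p = lp_power_sum p z"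
  by (simp add: lp_norm_eq_lp_power_sum powr_powr)

lemma lp_norm_power2: "lp_norm p z ^ 2 = lp_power_sum p z powr (2/p)"
  by (simp add: lp_norm_eq_lp_power_sum powr_powr flip: powr_numeral)

lemma lp_norm_zero [simp]: "lp_norm p 0 = 0"
  by (simp add: lp_norm_eq_lp_power_sum lp_power_sum_def)

lemma lp_norm_scaleR:
  assumes "0 < p" shows "lp_norm p (c *\<^sub>R z) = \<bar>c\<bar> * lp_norm p z"
proof -
  have "lp_power_sum p (c *\<^sub>R z) = \<bar>c\<bar> powr p * lp_power_sum p z"
    by (simp add: lp_power_sum_def sum_distrib_left powr_mult)
  then show ?thesis using assms by (simp add: lp_norm_eq_lp_power_sum powr_mult powr_powr)
qed

lemma lp_power_sum_convex_combination_le: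
  assumes p: "1 \<le> p" and fin: "finite F" and ne: "F \<noteq> {}"
    and u_nonneg: "\<And>s. s \<in> F \<Longrightarrow> 0 \<le> u s" and u_sum: "sum u F = 1"
  shows "lp_power_sum p (\<Sum>t\<in>F. u t *\<^sub>R w t) \<le> (\<Sum>t\<in>F. u t * lp_power_sum p (w t))"
proof -
  have "cmod (entry (\<Sum>t\<in>F. u t *\<^sub>R w t) k) powr p \<le> (\<Sum>t\<in>F. u t * cmod (entry (w t) k) powr p)"
    for k
  proof -
    have "cmod (entry (\<Sum>t\<in>F. u t *\<^sub>R w t) k) \<le> (\<Sum>t\<in>F. u t * cmod (entry (w t) k))"
      using norm_sum[of "\<lambda>t. u t *\<^sub>R entry (w t) k" F] u_nonneg
      by (simp add: abs_of_nonneg cong: sum.cong)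
    then have "cmod (entry (\<Sum>t\<in>F. u t *\<^sub>R w t) k) powr p
        \<le> (\<Sum>t\<in>F. u t * cmod (entry (w t) k)) powr p"
      using p by (intro powr_mono2) auto
    also have "\<dots> \<le> (\<Sum>t\<in>F. u t * cmod (entry (w t) k) powr p)"
      using convex_on_sum[OF fin ne powr_convex_nonneg[OF p] u_sum, of "\<lambda>t. cmod (entry (w t) k)"]
        u_nonneg by simp
    finally show ?thesis .
  qed
  then have "lp_power_sum p (\<Sum>t\<in>F. u t *\<^sub>R w t) \<le> (\<Sum>k\<in>UNIV. \<Sum>t\<in>F. u t * cmod (entry (w t) k) powr p)"
    unfolding lp_power_sum_def by (rule sum_mono)
  also have "\<dots> = (\<Sum>t\<in>F. u t * lp_power_sum p (w t))"
    unfolding lp_power_sum_def by (simp add: sum_distrib_left sum.swap[of _ F])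
  finally show ?thesis .
qed

lemma lp_norm_le_lp_diam:
  fixes S :: "(complex ^ 'n ^ 'n) set"
  assumes bS: "bounded S" and p: "0 < p" and x: "x \<in> S" and y: "y \<in> S"
  shows "lp_norm p (x - y) \<le> lp_diam p S"
proof -
  obtain M where M: "\<forall>x\<in>S. norm x \<le> M" using bS by (auto simp: bounded_iff)
  have entry_le: "cmod (entry z k) \<le> norm z" for z :: "complex ^ 'n ^ 'n" and k
    unfolding entry_def
    by (rule order_trans[OF Finite_Cartesian_Product.norm_nth_le Finite_Cartesian_Product.norm_nth_le])
  define B where "B = (real CARD('n \<times> 'n) * (2 * M) powr p) powr (1/p)"
  have le_B: "lp_norm p (a - b) \<le> B" if "a \<in> S" "b \<in> S" for a b
  proof -
    have "norm a \<le> M" "norm b \<le> M" using M that by auto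
    then have "norm (a - b) \<le> 2 * M" using norm_triangle_ineq4[of a b] by linarith
    then have "lp_power_sum p (a - b) \<le> (\<Sum>k\<in>(UNIV :: ('n \<times> 'n) set). (2 * M) powr p)"
      unfolding lp_power_sum_def
      by (intro sum_mono powr_mono2) (use p entry_le[of "a - b"] in \<open>auto intro: order_trans\<close>)
    then show ?thesis unfolding lp_norm_eq_lp_power_sum B_def
      by (intro powr_mono2) (use p in auto)
  qed
  have bdd_inner: "bdd_above ((\<lambda>b. lp_norm p (a - b)) ` S)" if "a \<in> S" for a
    by (rule bdd_aboveI2[of _ _ B]) (use le_B that in auto)
  have bdd_outer: "bdd_above ((\<lambda>a. SUP b\<in>S. lp_norm p (a - b)) ` S)"
    by (rule bdd_aboveI2[of _ _ B], rule cSUP_least) (use le_B in auto)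
  have "lp_norm p (x - y) \<le> (SUP b\<in>S. lp_norm p (x - b))"
    by (rule cSUP_upper[OF y bdd_inner[OF x]])
  also have "\<dots> \<le> (SUP a\<in>S. SUP b\<in>S. lp_norm p (a - b))"
    by (rule cSUP_upper[OF x bdd_outer])
  finally show ?thesis unfolding lp_diam_def .
qed

lemma lp_diam_nonneg:
  assumes "bounded S" "0 < p" "S \<noteq> {}" shows "0 \<le> lp_diam p S"
proof -
  obtain x where "x \<in> S" using assms(3) by blast
  then show ?thesis using lp_norm_le_lp_diam[OF assms(1,2)] lp_norm_nonneg[of p "x - x"] by fastforce
qed

section \<open>Greedy approximation in a convex hull\<close>

lemma convex_hull_greedy_sequence:
  fixes S :: "(complex ^ 'n ^ 'n) set" and \<Phi> :: "complex ^ 'n ^ 'n \<Rightarrow> real"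
  assumes p: "1 \<le> p" and bS: "bounded S" and A: "A \<in> convex hull S" and \<Phi>_0: "\<Phi> 0 = 0"
    and step: "\<And>(F :: (complex ^ 'n ^ 'n) set) u y e. finite F \<Longrightarrow> (\<And>s. s \<in> F \<Longrightarrow> 0 \<le> u s)
      \<Longrightarrow> sum u F = 1 \<Longrightarrow> (\<Sum>s\<in>F. u s *\<^sub>R y s) = 0
      \<Longrightarrow> (\<And>s. s \<in> F \<Longrightarrow> lp_norm p (y s) \<le> lp_diam p S)
      \<Longrightarrow> (\<Sum>s\<in>F. u s * \<Phi> (e + y s)) \<le> \<Phi> e + K"
  shows "\<exists>X. (\<forall>i. X i \<in> S) \<and> (\<forall>k. \<Phi> (\<Sum>i=1..k. (A - X i)) \<le> real k * K)"
proof -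
  obtain F u where F: "finite F" "F \<subseteq> S" and u_nonneg: "\<And>s. s \<in> F \<Longrightarrow> 0 \<le> u s"
    and u_sum: "sum u F = 1" and u_A: "(\<Sum>s\<in>F. u s *\<^sub>R s) = A"
    using A unfolding convex_hull_explicit by blast
  have ne: "F \<noteq> {}" using u_sum by auto
  define D where "D = lp_diam p S"
  have "S \<noteq> {}" using F(2) ne by auto
  then have D_nonneg: "0 \<le> D" unfolding D_def using lp_diam_nonneg[OF bS] p by simp
  have A_minus: "A - s = (\<Sum>t\<in>F. u t *\<^sub>R (t - s))" for s
    by (simp add: scaleR_diff_right sum_subtractf u_sum u_A flip: scaleR_sum_left)
  have mean: "(\<Sum>s\<in>F. u s *\<^sub>R (A - s)) = 0"
    by (simp add: scaleR_diff_right sum_subtractf u_sum u_A flip: scaleR_sum_left)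
  have deviation: "lp_norm p (A - s) \<le> D" if s: "s \<in> F" for s
  proof -
    have "lp_power_sum p (A - s) \<le> (\<Sum>t\<in>F. u t * lp_power_sum p (t - s))"
      unfolding A_minus
      by (rule lp_power_sum_convex_combination_le) (use p F(1) ne u_nonneg u_sum in auto)
    also have "\<dots> \<le> (\<Sum>t\<in>F. u t * D powr p)"
    proof (intro sum_mono mult_left_mono u_nonneg)
      fix t assume "t \<in> F"
      then have "lp_norm p (t - s) \<le> D"
        unfolding D_def using F(2) s p by (intro lp_norm_le_lp_diam[OF bS]) auto
      then show "lp_power_sum p (t - s) \<le> D powr p"
        using p by (auto simp flip: lp_norm_powr intro: powr_mono2)
    qed
    also have "\<dots> = D powr p" by (simp add: u_sum flip: sum_distrib_right)
    finally have "lp_power_sum p (A - s) powr (1/p) \<le> (D powr p) powr (1/p)"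
      using p by (intro powr_mono2) auto
    then show ?thesis using p D_nonneg by (simp add: lp_norm_eq_lp_power_sum powr_powr)
  qed
  obtain X where "\<forall>i. X i \<in> F" "\<forall>k. \<Phi> (\<Sum>i=1..k. (A - X i)) \<le> real k * K"
    using greedy_sequence[OF F(1) ne u_nonneg u_sum step[where y = "\<lambda>s. A - s", OF F(1) u_nonneg
        u_sum mean deviation[unfolded D_def]] \<Phi>_0] by blast
  then show ?thesis using F(2) by blast
qed

lemma lp_norm_average_error:
  fixes X :: "nat \<Rightarrow> complex ^ 'n ^ 'n"
  assumes "1 \<le> k" "0 < p"
  shows "lp_norm p (A - (1 / real k) *\<^sub>R (\<Sum>i=1..k. X i)) = lp_norm p (\<Sum>i=1..k. (A - X i)) / real k"
proof -
  have "(\<Sum>i=1..k. A) = real k *\<^sub>R A" by (simp only: sum_constant_scaleR) simp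
  then have "A - (1 / real k) *\<^sub>R (\<Sum>i=1..k. X i) = (1 / real k) *\<^sub>R (\<Sum>i=1..k. (A - X i))"
    using assms by (simp add: sum_subtractf scaleR_diff_right)
  then show ?thesis using assms by (simp add: lp_norm_scaleR)
qed

lemma lp_approx_sequence_le2:
  fixes S :: "(complex ^ 'n ^ 'n) set"
  assumes p: "1 < p" "p \<le> 2" and bS: "bounded S" and A: "A \<in> convex hull S"
  shows "\<exists>X. (\<forall>i. X i \<in> S) \<and> (\<forall>k\<ge>1. lp_norm p (A - (1 / real k) *\<^sub>R (\<Sum>i=1..k. X i))
    \<le> 6 powr (1/p) * real k powr (1/p - 1) * lp_diam p S)"
proof -
  define D where "D = lp_diam p S"
  have "S \<noteq> {}" using A by auto
  then have D_nonneg: "0 \<le> D" unfolding D_def using lp_diam_nonneg[OF bS] p by simp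
  have "\<exists>X. (\<forall>i. X i \<in> S) \<and> (\<forall>k. lp_power_sum p (\<Sum>i=1..k. (A - X i)) \<le> real k * (6 * D powr p))"
  proof (rule convex_hull_greedy_sequence[OF _ bS A])
    fix F :: "(complex ^ 'n ^ 'n) set" and u y e
    assume u_nonneg: "\<And>s. s \<in> F \<Longrightarrow> 0 \<le> u s" and u_sum: "sum u F = 1"
      and mean: "(\<Sum>s\<in>F. u s *\<^sub>R y s) = 0" and dev: "\<And>s. s \<in> F \<Longrightarrow> lp_norm p (y s) \<le> lp_diam p S"
    have mean_entry: "(\<Sum>s\<in>F. u s *\<^sub>R entry (y s) k) = 0" for k
      using arg_cong[OF mean, of "\<lambda>z. entry z k"] by simp
    have "(\<Sum>s\<in>F. u s * lp_power_sum p (e + y s))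
        \<le> lp_power_sum p e + 6 * (\<Sum>s\<in>F. u s * lp_power_sum p (y s))"
      unfolding lp_power_sum_def
      using mean_sum_cmod_powr_add_le[where I = UNIV and x = "entry e", OF p u_nonneg u_sum mean_entry]
      by simp
    also have "(\<Sum>s\<in>F. u s * lp_power_sum p (y s)) \<le> (\<Sum>s\<in>F. u s * D powr p)"
      using dev p by (intro sum_mono mult_left_mono u_nonneg)
        (auto simp: D_def simp flip: lp_norm_powr intro: powr_mono2)
    finally show "(\<Sum>s\<in>F. u s * lp_power_sum p (e + y s)) \<le> lp_power_sum p e + 6 * D powr p"
      by (simp add: u_sum flip: sum_distrib_right)
  qed (use p in \<open>simp_all add: lp_power_sum_def\<close>)
  then obtain X where XS: "\<forall>i. X i \<in> S"
    and X_le: "\<And>k. lp_power_sum p (\<Sum>i=1..k. (A - X i)) \<le> real k * (6 * D powr p)"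
    by blast
  have "lp_norm p (A - (1 / real k) *\<^sub>R (\<Sum>i=1..k. X i)) \<le> 6 powr (1/p) * real k powr (1/p - 1) * D"
    if k: "1 \<le> k" for k
  proof -
    have "lp_norm p (A - (1 / real k) *\<^sub>R (\<Sum>i=1..k. X i))
        = lp_power_sum p (\<Sum>i=1..k. (A - X i)) powr (1/p) / real k"
      using lp_norm_average_error[of k p A X] k p by (simp add: lp_norm_eq_lp_power_sum)
    also have "\<dots> \<le> (real k * (6 * D powr p)) powr (1/p) / real k"
      using X_le p by (intro divide_right_mono powr_mono2) auto
    also have "\<dots> = 6 powr (1/p) * (real k powr (1/p) / real k) * D"
      using D_nonneg p by (simp add: powr_mult powr_powr)
    also have "real k powr (1/p) / real k = real k powr (1/p - 1)"
      using k by (simp add: powr_diff)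
    finally show ?thesis .
  qed
  then show ?thesis using XS D_def by blast
qed

lemma lp_approx_sequence_ge2:
  fixes S :: "(complex ^ 'n ^ 'n) set"
  assumes p: "2 \<le> p" and bS: "bounded S" and A: "A \<in> convex hull S"
  shows "\<exists>X. (\<forall>i. X i \<in> S) \<and> (\<forall>k\<ge>1. lp_norm p (A - (1 / real k) *\<^sub>R (\<Sum>i=1..k. X i))
    \<le> sqrt ((p - 1) / real k) * lp_diam p S)"
proof -
  define D where "D = lp_diam p S"
  have "S \<noteq> {}" using A by auto
  then have D_nonneg: "0 \<le> D" unfolding D_def using lp_diam_nonneg[OF bS] p by simp
  have norm_sq: "lp_norm p z ^ 2 = (\<Sum>k\<in>UNIV. cmod (entry z k) powr (2 * (p/2))) powr (1 / (p/2))" for z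
    by (simp add: lp_norm_power2 lp_power_sum_def)
  have "\<exists>X. (\<forall>i. X i \<in> S) \<and> (\<forall>k. lp_norm p (\<Sum>i=1..k. (A - X i)) ^ 2 \<le> real k * ((p - 1) * D^2))"
  proof (rule convex_hull_greedy_sequence[OF _ bS A])
    fix F :: "(complex ^ 'n ^ 'n) set" and u y e
    assume u_nonneg: "\<And>s. s \<in> F \<Longrightarrow> 0 \<le> u s" and u_sum: "sum u F = 1"
      and mean: "(\<Sum>s\<in>F. u s *\<^sub>R y s) = 0" and dev: "\<And>s. s \<in> F \<Longrightarrow> lp_norm p (y s) \<le> lp_diam p S"
    have mean_entry: "(\<Sum>s\<in>F. u s *\<^sub>R entry (y s) k) = 0" for k
      using arg_cong[OF mean, of "\<lambda>z. entry z k"] by simp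
    have "(\<Sum>s\<in>F. u s * lp_norm p (e + y s) ^ 2)
        \<le> lp_norm p e ^ 2 + (p - 1) * (\<Sum>s\<in>F. u s * lp_norm p (y s) ^ 2)"
      unfolding norm_sq
      using mean_sum_cmod_powr_root_add_le[where I = UNIV and q = "p/2" and x = "entry e",
        OF _ _ _ u_nonneg u_sum mean_entry] p
      by simp
    also have "(\<Sum>s\<in>F. u s * lp_norm p (y s) ^ 2) \<le> (\<Sum>s\<in>F. u s * D^2)"
      using dev by (intro sum_mono mult_left_mono u_nonneg) (auto simp: D_def intro: power_mono)
    finally show "(\<Sum>s\<in>F. u s * lp_norm p (e + y s) ^ 2) \<le> lp_norm p e ^ 2 + (p - 1) * D^2"
      using p by (simp add: u_sum flip: sum_distrib_right)
  qed (use p in simp_all)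
  then obtain X where XS: "\<forall>i. X i \<in> S"
    and X_le: "\<And>k. lp_norm p (\<Sum>i=1..k. (A - X i)) ^ 2 \<le> real k * ((p - 1) * D^2)"
    by blast
  have "lp_norm p (A - (1 / real k) *\<^sub>R (\<Sum>i=1..k. X i)) \<le> sqrt ((p - 1) / real k) * D"
    if k: "1 \<le> k" for k
  proof -
    have "(lp_norm p (\<Sum>i=1..k. (A - X i)) / real k)^2 \<le> (p - 1) / real k * D^2"
      using X_le[of k] k by (simp add: power_divide field_simps power2_eq_square)
    then have "lp_norm p (\<Sum>i=1..k. (A - X i)) / real k \<le> sqrt ((p - 1) / real k * D^2)"
      by (rule real_le_rsqrt)
    also have "\<dots> = sqrt ((p - 1) / real k) * D"
      using D_nonneg real_sqrt_mult[of "(p - 1) / real k" "D^2"] by simp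
    finally show ?thesis
      using lp_norm_average_error[of k p A X] k p by simp
  qed
  then show ?thesis using XS D_def by blast
qed

lemma exp_2_ge_6: "6 \<le> exp (2::real)"
proof -
  have "1 + 1 + 1\<^sup>2 / 2 \<le> exp (1::real)" by (rule exp_lower_Taylor_quadratic) simp
  then have e: "5/2 \<le> exp (1::real)" by simp
  have "5/2 * (5/2) \<le> exp (1::real) * exp 1" by (rule mult_mono[OF e e]) auto
  then show ?thesis by (simp flip: exp_add)
qed

lemma root_6_le_rate_constant:
  assumes p: "1 < (p::real)" "p \<le> 2"
  shows "6 powr (1/p) \<le> 2 * exp 2 / p powr (1/p)"
proof -
  have "(6*p) powr (1/p) \<le> (6*p) powr 1"
    by (rule powr_mono) (use p in auto)
  also have "\<dots> \<le> 2 * exp 2" using p exp_2_ge_6 by simp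
  finally have "6 powr (1/p) * p powr (1/p) \<le> 2 * exp 2" using p by (simp add: powr_mult)
  then show ?thesis using p by (simp add: le_divide_eq)
qed

lemma rate_constants_at_2:
  assumes "0 < k"
  shows "2 * exp 2 / 2 powr (1/2) * k powr (1/2 - 1) = exp 2 * sqrt (2 * (2 - 1) / k)"
  using assms by (simp add: powr_half_sqrt powr_minus real_sqrt_divide field_simps flip: powr_minus_divide)

lemma sample_size_constants_at_2:
  fixes x :: real
  assumes "0 \<le> x"
  shows "(2 * exp 2 / 2 powr (1 / 2)) powr (2 / (2 - 1)) * x powr (2 / (2 - 1))
    = 2 * (2 - 1) * exp 2 ^ 2 * x\<^sup>2"
proof -
  have "(2 * exp 2 / sqrt 2) powr 2 = 2 * exp 2 ^ 2"
    by (simp add: power_divide power_mult_distrib)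
  then show ?thesis using assms by (simp add: powr_half_sqrt)
qed

lemma lp_approx_sequence:
  fixes p :: real and S :: "(complex ^ 'n ^ 'n) set" and A :: "complex ^ 'n ^ 'n"
  assumes p: "p > 1" and bS: "bounded S" and A: "A \<in> convex hull S"
  shows "\<exists>X :: nat \<Rightarrow> complex ^ 'n ^ 'n. (\<forall>i\<ge>1. X i \<in> S) \<and>
            (\<forall>k\<ge>1. (p \<le> 2 \<longrightarrow>
                 lp_norm p (A - (1 / real k) *\<^sub>R (\<Sum>i=1..k. X i))
                   \<le> 2 * exp 2 / p powr (1 / p) * real k powr (1 / p - 1) * lp_diam p S)
              \<and> (p \<ge> 2 \<longrightarrow>
                 lp_norm p (A - (1 / real k) *\<^sub>R (\<Sum>i=1..k. X i))
                   \<le> exp 2 * sqrt (2 * (p - 1) / real k) * lp_diam p S))"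
proof -
  define D where "D = lp_diam p S"
  have "S \<noteq> {}" using A by auto
  then have D_nonneg: "0 \<le> D" unfolding D_def using lp_diam_nonneg[OF bS] p by simp
  show ?thesis
  proof (cases "p < 2")
    case True
    obtain X where XS: "\<forall>i. X i \<in> S" and err: "\<forall>k\<ge>1. lp_norm p (A - (1 / real k) *\<^sub>R (\<Sum>i=1..k. X i))
        \<le> 6 powr (1/p) * real k powr (1/p - 1) * D"
      using lp_approx_sequence_le2[OF p _ bS A] True D_def by auto
    have "6 powr (1/p) * real k powr (1/p - 1) * D
        \<le> 2 * exp 2 / p powr (1 / p) * real k powr (1 / p - 1) * D" for k
      using p True D_nonneg by (intro mult_right_mono root_6_le_rate_constant) auto
    then show ?thesis using XS err True D_def by (meson order_trans not_le)
  next
    case False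
    obtain X where XS: "\<forall>i. X i \<in> S" and err: "\<forall>k\<ge>1. lp_norm p (A - (1 / real k) *\<^sub>R (\<Sum>i=1..k. X i))
        \<le> sqrt ((p - 1) / real k) * D"
      using lp_approx_sequence_ge2[OF _ bS A, of p] False D_def by auto
    have "sqrt ((p - 1) / real k) * D \<le> exp 2 * sqrt (2 * (p - 1) / real k) * D" for k
    proof (rule mult_right_mono[OF _ D_nonneg])
      have "sqrt ((p - 1) / real k) \<le> sqrt (2 * (p - 1) / real k)"
        using False by (simp add: divide_right_mono)
      also have "\<dots> \<le> exp 2 * sqrt (2 * (p - 1) / real k)"
        using exp_2_ge_6 False by (simp add: mult_le_cancel_right1 not_less)
      finally show "sqrt ((p - 1) / real k) \<le> exp 2 * sqrt (2 * (p - 1) / real k)" .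
    qed
    then have "lp_norm p (A - (1 / real k) *\<^sub>R (\<Sum>i=1..k. X i))
        \<le> exp 2 * sqrt (2 * (p - 1) / real k) * D" if "1 \<le> k" for k
      using err that order_trans by blast
    moreover have "lp_norm p (A - (1 / real k) *\<^sub>R (\<Sum>i=1..k. X i))
        \<le> 2 * exp 2 / p powr (1 / p) * real k powr (1 / p - 1) * D" if "p \<le> 2" "1 \<le> k" for k
    proof -
      have "p = 2" using that False by simp
      then show ?thesis using calculation[OF that(2)] rate_constants_at_2[of "real k"] that by simp
    qed
    ultimately show ?thesis using XS unfolding D_def by blast
  qed
qed

lemma rate_powr_le_eps:
  fixes p c D \<epsilon> :: real and m :: nat
  assumes p: "1 < p" and D: "0 \<le> D" and \<epsilon>: "0 < \<epsilon>" and c: "0 < c" and m: "1 \<le> m"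
    and m_ge: "c powr (p / (p - 1)) * (D / \<epsilon>) powr (p / (p - 1)) \<le> real m"
  shows "c * real m powr (1 / p - 1) * D \<le> \<epsilon>"
proof (cases "D = 0")
  case False
  with D have D_pos: "0 < D" by simp
  define r where "r = p / (p - 1)"
  have r_pos: "0 < r" using p by (simp add: r_def)
  define z where "z = c * D / \<epsilon>"
  have z_pos: "0 < z" using c D_pos \<epsilon> by (simp add: z_def)
  have "z powr r \<le> real m"
    using m_ge c D_pos \<epsilon> powr_mult[of c "D / \<epsilon>" r] by (simp add: z_def r_def)
  then have "(z powr r) powr (1/r) \<le> real m powr (1/r)"
    using r_pos by (intro powr_mono2) auto
  then have z_le: "z \<le> real m powr (1/r)" using r_pos z_pos by (simp add: powr_powr)
  have "1/r = 1 - 1/p" using p by (simp add: r_def field_simps)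
  then have "real m powr (1/p - 1) = inverse (real m powr (1/r))"
    by (simp flip: powr_minus)
  then have "c * real m powr (1/p - 1) * D = c * D / real m powr (1/r)"
    by (simp add: divide_inverse mult_ac)
  also have "\<dots> \<le> c * D / z"
    by (rule divide_left_mono[OF z_le]) (use c D_pos z_pos m in auto)
  also have "\<dots> = \<epsilon>" using c D_pos \<epsilon> by (simp add: z_def)
  finally show ?thesis .
qed (use \<epsilon> in simp)

lemma rate_sqrt_le_eps:
  fixes p D \<epsilon> e :: real and m :: nat
  assumes p: "1 \<le> p" and \<epsilon>: "0 < \<epsilon>" and m: "1 \<le> m"
    and m_ge: "2 * (p - 1) * e ^ 2 * (D / \<epsilon>)\<^sup>2 \<le> real m"
  shows "e * sqrt (2 * (p - 1) / real m) * D \<le> \<epsilon>"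
proof -
  have "2 * (p - 1) * e ^ 2 * D^2 \<le> real m * \<epsilon>^2"
    using mult_right_mono[OF m_ge, of "\<epsilon>^2"] \<epsilon> by (simp add: power_divide)
  then have "(e * sqrt (2 * (p - 1) / real m) * D)^2 \<le> \<epsilon>^2"
    using p m by (simp add: power_mult_distrib field_simps)
  then show ?thesis by (rule power2_le_imp_le) (use \<epsilon> in simp)
qed

lemma lp_approx_few_points:
  fixes p :: real and S :: "(complex ^ 'n ^ 'n) set" and A :: "complex ^ 'n ^ 'n"
  assumes p: "p > 1" and bS: "bounded S" and A: "A \<in> convex hull S" and \<epsilon>: "\<epsilon> > 0"
  shows "\<exists>B m. \<exists>Y :: nat \<Rightarrow> complex ^ 'n ^ 'n.
            lp_norm p (A - B) \<le> \<epsilon> \<and> m \<ge> 1 \<and> (\<forall>i\<in>{1..m}. Y i \<in> S) \<and>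
            B = (1 / real m) *\<^sub>R (\<Sum>i=1..m. Y i) \<and>
            (p \<le> 2 \<longrightarrow> m \<le> max 1 (nat \<lceil>(2 * exp 2 / p powr (1 / p)) powr (p / (p - 1))
                                       * (lp_diam p S / \<epsilon>) powr (p / (p - 1))\<rceil>)) \<and>
            (p \<ge> 2 \<longrightarrow> m \<le> max 1 (nat \<lceil>2 * (p - 1) * exp 2 ^ 2 * (lp_diam p S / \<epsilon>)\<^sup>2\<rceil>))"
proof -
  define D where "D = lp_diam p S"
  define c where "c = 2 * exp 2 / p powr (1 / p)"
  obtain X where XS: "\<forall>i\<ge>1. X i \<in> S"
    and err_le2: "\<And>k. 1 \<le> k \<Longrightarrow> p \<le> 2 \<Longrightarrow>
      lp_norm p (A - (1 / real k) *\<^sub>R (\<Sum>i=1..k. X i)) \<le> c * real k powr (1 / p - 1) * D"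
    and err_ge2: "\<And>k. 1 \<le> k \<Longrightarrow> 2 \<le> p \<Longrightarrow>
      lp_norm p (A - (1 / real k) *\<^sub>R (\<Sum>i=1..k. X i)) \<le> exp 2 * sqrt (2 * (p - 1) / real k) * D"
    using lp_approx_sequence[OF p bS A] unfolding c_def D_def by blast
  have "S \<noteq> {}" using A by auto
  then have D_nonneg: "0 \<le> D" unfolding D_def using lp_diam_nonneg[OF bS] p by simp
  define N1 where "N1 = c powr (p / (p - 1)) * (D / \<epsilon>) powr (p / (p - 1))"
  define N2 where "N2 = 2 * (p - 1) * exp 2 ^ 2 * (D / \<epsilon>)\<^sup>2"
  define m where "m = max 1 (nat \<lceil>if p \<le> 2 then N1 else N2\<rceil>)"
  have m: "1 \<le> m" by (simp add: m_def)
  have m_ge: "(if p \<le> 2 then N1 else N2) \<le> real m"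
    unfolding m_def using real_nat_ceiling_ge of_nat_mono[OF max.cobounded2] order_trans by blast
  have "lp_norm p (A - (1 / real m) *\<^sub>R (\<Sum>i=1..m. X i)) \<le> \<epsilon>"
  proof (cases "p \<le> 2")
    case True
    have "0 < c" using p by (simp add: c_def)
    then have "c * real m powr (1 / p - 1) * D \<le> \<epsilon>"
      using m_ge True by (intro rate_powr_le_eps[OF p D_nonneg \<epsilon> _ m]) (simp_all add: N1_def)
    then show ?thesis using err_le2[OF m True] by linarith
  next
    case False
    then show ?thesis
      using err_ge2[OF m] rate_sqrt_le_eps[of p \<epsilon> m "exp 2" D] m m_ge \<epsilon>
      by (simp add: N2_def)
  qed
  moreover have "m \<le> max 1 (nat \<lceil>N1\<rceil>)" if "p \<le> 2"
    using that by (simp add: m_def)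
  moreover have "m \<le> max 1 (nat \<lceil>N2\<rceil>)" if "2 \<le> p"
  proof (cases "p = 2")
    case True
    then have "N1 = N2"
      using sample_size_constants_at_2[of "D / \<epsilon>"] D_nonneg \<epsilon> by (simp add: N1_def N2_def c_def)
    then show ?thesis using True by (simp add: m_def)
  qed (use that in \<open>simp add: m_def\<close>)
  ultimately show ?thesis
    using m XS unfolding N1_def N2_def c_def D_def m_def[symmetric]
    by (intro exI[of _ "(1 / real m) *\<^sub>R (\<Sum>i=1..m. X i)"] exI[of _ m] exI[of _ X]) auto
qed

theorem mainTheorem4:
  fixes p :: real and S :: "(complex ^ 'n ^ 'n) set" and A :: "complex ^ 'n ^ 'n"
  assumes p: "p > 1"
    and bS: "bounded S"
    and A: "A \<in> convex hull S"
  shows "(\<exists>X :: nat \<Rightarrow> complex ^ 'n ^ 'n. (\<forall>i\<ge>1. X i \<in> S) \<and>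
            (\<forall>k\<ge>1. (p \<le> 2 \<longrightarrow>
                 lp_norm p (A - (1 / real k) *\<^sub>R (\<Sum>i=1..k. X i))
                   \<le> 2 * exp 2 / p powr (1 / p) * real k powr (1 / p - 1) * lp_diam p S)
              \<and> (p \<ge> 2 \<longrightarrow>
                 lp_norm p (A - (1 / real k) *\<^sub>R (\<Sum>i=1..k. X i))
                   \<le> exp 2 * sqrt (2 * (p - 1) / real k) * lp_diam p S)))
       \<and> (\<forall>\<epsilon>>0. \<exists>B m. \<exists>Y :: nat \<Rightarrow> complex ^ 'n ^ 'n.
            lp_norm p (A - B) \<le> \<epsilon> \<and> m \<ge> 1 \<and> (\<forall>i\<in>{1..m}. Y i \<in> S) \<and>
            B = (1 / real m) *\<^sub>R (\<Sum>i=1..m. Y i) \<and>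
            (p \<le> 2 \<longrightarrow> m \<le> max 1 (nat \<lceil>(2 * exp 2 / p powr (1 / p)) powr (p / (p - 1))
                                       * (lp_diam p S / \<epsilon>) powr (p / (p - 1))\<rceil>)) \<and>
            (p \<ge> 2 \<longrightarrow> m \<le> max 1 (nat \<lceil>2 * (p - 1) * exp 2 ^ 2 * (lp_diam p S / \<epsilon>)\<^sup>2\<rceil>)))"
  using lp_approx_sequence[OF p bS A] lp_approx_few_points[OF p bS A] by blast

end
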